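(* Let $\mathbf A$ be a t-algebra of type $\tau$ and trace $\mathsf a$, $X$ a set, and $u_1,u_2\in T_\tau(X)$. Then $\alpha(u_1)=\alpha(u_2)$ for every weak homomorphism $\alpha:\mathcal T_\tau(X)\to\mathbf A^{(\mathsf a)}$ if and only if $\beta(u_1)=\beta(u_2)$ for every strong homomorphism $\beta:\mathcal T_\tau(X)\to\mathbf A^{(\mathsf a)}$.
   Context: $\mathbb N=\{1,2,\dots\}$. A thread on a set $A$ is $s=(s_i)_{i\in\mathbb N}\in A^{\mathbb N}$; for a thread $r$ and $a_1,\dots,a_n\in A$, $r[a_1,\dots,a_n]$ is the thread with $i$-th entry $a_i$ for $i\le n$ and $r_i$ for $i>n$. Write $r\equiv_{\mathbb N}s$ iff $\{i:r_i\ne s_i\}$ is finite; $[s]_{\mathbb N}$ is the class of $s$. A trace on $A$ is a nonempty $\mathsf a\subseteq A^{\mathbb N}$ that is a union of $\equiv_{\mathbb N}$-classes. For a set $\tau$ of operation symbols, a t-algebra of type $\tau$ and trace $\mathsf a$ is $\mathbf A=(A,\mathsf a,\sigma^{\mathbf A})_{\sigma\in\tau}$ with $\mathsf a$ a trace on $A$ and each $\sigma^{\mathbf A}:\mathsf a\to A$ an arbitrary map. Clone $\tau$-algebras: algebras $(C,q_n,\mathsf e_i,\sigma)_{n\ge0,i\ge1,\sigma\in\tau}$ ($\mathsf e_i,\sigma$ constants, $q_n$ of arity $n+1$) satisfying (C1) $q_n(\mathsf e_i,x_1,\dots,x_n)=x_i$ ($i\le n$); (C2) $q_n(\mathsf e_j,x_1,\dots,x_n)=\mathsf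 e_j$ ($j>n$); (C3) $q_n(x,\mathsf e_1,\dots,\mathsf e_n)=x$; (C4) $q_n(x,\bar y)=q_k(x,\bar y,\mathsf e_{n+1},\dots,\mathsf e_k)$ ($k>n$); (C5) $q_n(q_n(x,\bar y),\bar z)=q_n(x,q_n(y_1,\bar z),\dots,q_n(y_n,\bar z))$. The full functional clone $\tau$-algebra $\mathbf A^{(\mathsf a)}$ has universe the set $A^{\mathsf a}$ of all maps $\mathsf a\to A$, with $\mathsf e_i(s)=s_i$, $q_n(\varphi,\psi_1,\dots,\psi_n)(s)=\varphi(s[\psi_1(s),\dots,\psi_n(s)])$ and constant $\sigma$ interpreted as $\sigma^{\mathbf A}$; it is a clone $\tau$-algebra. $T_\tau(X)$ ($\tau$-hyperterms over $X$, $X\cap\tau=\emptyset$) is the least set containing $\mathsf e_1,\mathsf e_2,\dots$ and $w(t_1,\dots,t_n,\mathsf e_{n+1},\mathsf e_{n+2},\dots)$ for $w\in\tau\cup X$, $n\ge0$, $t_i\in T_\tau(X)$; it carries the structure of the free clone $\tau$-algebra $\mathcal T_\tau(X)$ over $X$ (each $x\in X$ identified with $x(\mathsf e_1,\mathsf e_2,\dots)$), with $q_n$ acting as simultaneous substitution of the $i$-th argument for $\mathsf e_i$, $i\le n$. A homomorphism of clone $\tau$-algebras $\alpha:\mathcal T_\tau(X)\to\mathbf A^{(\mathsf a)}$ is weak if $\alpha(x)$ is a constant map for every $x\in X$, and strong if $\alpha(x)$ is semiconstant for every $x\in X$, where $\varphi:\mathsf a\to A$ is semiconstant if $r\equiv_{\mathbb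 N}s$ implies $\varphi(r)=\varphi(s)$ for $r,s\in\mathsf a$. *)

theory Defs
  imports "HOL-Library.FuncSet"
begin

(* Convention: indices are shifted to start at 0.  A thread s :: nat \<Rightarrow> 'a has
   paper-entry s_(i+1) = s i; the projection e_(i+1) is E i; the (i+1)-th argument
   of a hyperterm w(t_1,t_2,...) is f i. *)

definition fin_diff :: "(nat \<Rightarrow> 'a) \<Rightarrow> (nat \<Rightarrow> 'a) \<Rightarrow> bool" where
  "fin_diff r s \<longleftrightarrow> finite {i. r i \<noteq> s i}"

definition is_trace :: "(nat \<Rightarrow> 'a) set \<Rightarrow> bool" where
  "is_trace a \<longleftrightarrow> a \<noteq> {} \<and> (\<forall>r s. r \<in> a \<longrightarrow> fin_diff r s \<longrightarrow> s \<in> a)"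

definition thread_upd :: "(nat \<Rightarrow> 'a) \<Rightarrow> 'a list \<Rightarrow> nat \<Rightarrow> 'a" where
  "thread_upd r xs = (\<lambda>i. if i < length xs then xs ! i else r i)"

datatype ('s, 'x) hterm = E nat | App "'s + 'x" "nat \<Rightarrow> ('s, 'x) hterm"

inductive_set hterms :: "'s set \<Rightarrow> 'x set \<Rightarrow> ('s, 'x) hterm set" for tau X where
  proj: "E i \<in> hterms tau X"
| app: "\<lbrakk> w \<in> Inl ` tau \<union> Inr ` X; \<And>i. f i \<in> hterms tau X;
          finite {i. f i \<noteq> E i} \<rbrakk> \<Longrightarrow> App w f \<in> hterms tau X"

primrec hsubst :: "(nat \<Rightarrow> ('s, 'x) hterm) \<Rightarrow> ('s, 'x) hterm \<Rightarrow> ('s, 'x) hterm" where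
  "hsubst g (E i) = g i"
| "hsubst g (App w f) = App w (\<lambda>i. hsubst g (f i))"

(* operation q_n of the free clone algebra T_tau(X): n = length ts *)
definition tq :: "('s, 'x) hterm \<Rightarrow> ('s, 'x) hterm list \<Rightarrow> ('s, 'x) hterm" where
  "tq t ts = hsubst (\<lambda>i. if i < length ts then ts ! i else E i) t"

definition tsym :: "('s + 'x) \<Rightarrow> ('s, 'x) hterm" where
  "tsym w = App w E"

(* full functional clone tau-algebra A^(a): universe a \<rightarrow>\<^sub>E UNIV *)
definition fproj :: "(nat \<Rightarrow> 'a) set \<Rightarrow> nat \<Rightarrow> (nat \<Rightarrow> 'a) \<Rightarrow> 'a" where
  "fproj a i = restrict (\<lambda>s. s i) a"

definition fq :: "(nat \<Rightarrow> 'a) set \<Rightarrow> ((nat \<Rightarrow> 'a) \<Rightarrow> 'a) \<Rightarrow> ((nat \<Rightarrow> 'a) \<Rightarrow> 'a) list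
                   \<Rightarrow> (nat \<Rightarrow> 'a) \<Rightarrow> 'a" where
  "fq a \<phi> \<psi>s = restrict (\<lambda>s. \<phi> (thread_upd s (map (\<lambda>\<psi>. \<psi> s) \<psi>s))) a"

(* homomorphism of clone tau-algebras T_tau(X) \<rightarrow> A^(a), where the t-algebra A
   has carrier UNIV::'a, trace a, and sigma^A = ops sigma restricted to a *)
definition clone_hom ::
  "'s set \<Rightarrow> 'x set \<Rightarrow> (nat \<Rightarrow> 'a) set \<Rightarrow> ('s \<Rightarrow> (nat \<Rightarrow> 'a) \<Rightarrow> 'a)
     \<Rightarrow> (('s, 'x) hterm \<Rightarrow> (nat \<Rightarrow> 'a) \<Rightarrow> 'a) \<Rightarrow> bool" where
  "clone_hom tau X a ops \<alpha> \<longleftrightarrow>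
     (\<forall>t \<in> hterms tau X. \<alpha> t \<in> a \<rightarrow>\<^sub>E UNIV) \<and>
     (\<forall>i. \<alpha> (E i) = fproj a i) \<and>
     (\<forall>\<sigma> \<in> tau. \<alpha> (tsym (Inl \<sigma>)) = restrict (ops \<sigma>) a) \<and>
     (\<forall>t ts. t \<in> hterms tau X \<longrightarrow> set ts \<subseteq> hterms tau X \<longrightarrow>
        \<alpha> (tq t ts) = fq a (\<alpha> t) (map \<alpha> ts))"

definition constant_on :: "(nat \<Rightarrow> 'a) set \<Rightarrow> ((nat \<Rightarrow> 'a) \<Rightarrow> 'a) \<Rightarrow> bool" where
  "constant_on a \<phi> \<longleftrightarrow> (\<exists>c. \<forall>s \<in> a. \<phi> s = c)"

definition semiconstant :: "(nat \<Rightarrow> 'a) set \<Rightarrow> ((nat \<Rightarrow> 'a) \<Rightarrow> 'a) \<Rightarrow> bool" where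
  "semiconstant a \<phi> \<longleftrightarrow> (\<forall>r \<in> a. \<forall>s \<in> a. fin_diff r s \<longrightarrow> \<phi> r = \<phi> s)"

definition weak_hom where
  "weak_hom tau X a ops \<alpha> \<longleftrightarrow> clone_hom tau X a ops \<alpha> \<and>
     (\<forall>x \<in> X. constant_on a (\<alpha> (tsym (Inr x))))"

definition strong_hom where
  "strong_hom tau X a ops \<alpha> \<longleftrightarrow> clone_hom tau X a ops \<alpha> \<and>
     (\<forall>x \<in> X. semiconstant a (\<alpha> (tsym (Inr x))))"

end

theory Submission
  imports Defs "HOL-Library.Infinite_Set"
begin

text \<open>Every clone homomorphism \<open>\<beta>\<close> evaluates a hyperterm on threads of the trace by interpreting
  each symbol \<open>w\<close> as \<open>\<beta> (tsym w)\<close>. If \<open>\<beta>\<close> is strong, the generators are semiconstant, and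
  evaluation at a thread \<open>s\<^sub>0\<close> only ever queries them at threads finitely different from \<open>s\<^sub>0\<close>;
  so freezing every generator at its value at \<open>s\<^sub>0\<close> gives a weak homomorphism that agrees
  with \<open>\<beta>\<close> at \<open>s\<^sub>0\<close>. Hence identities valid for all weak homomorphisms hold for all strong
  ones; the converse is trivial since constant maps are semiconstant.\<close>

primrec hterm_eval ::
  "('s + 'x \<Rightarrow> (nat \<Rightarrow> 'a) \<Rightarrow> 'a) \<Rightarrow> ('s, 'x) hterm \<Rightarrow> (nat \<Rightarrow> 'a) \<Rightarrow> 'a" where
  "hterm_eval G (E i) = (\<lambda>s. s i)"
| "hterm_eval G (App w f) = (\<lambda>s. G w (\<lambda>i. hterm_eval G (f i) s))"

lemma fin_diff_refl: "fin_diff s s"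
  by (simp add: fin_diff_def)

lemma fin_diff_trans: "fin_diff r s \<Longrightarrow> fin_diff s t \<Longrightarrow> fin_diff r t"
  unfolding fin_diff_def
  by (rule finite_subset[of _ "{i. r i \<noteq> s i} \<union> {i. s i \<noteq> t i}"]) auto

lemma fin_diff_thread_upd: "fin_diff s (thread_upd s xs)"
  unfolding fin_diff_def thread_upd_def
  by (rule finite_subset[of _ "{..<length xs}"]) auto

lemma fin_diff_hterm_eval_args:
  assumes "finite {i. f i \<noteq> E i}"
  shows "fin_diff s (\<lambda>i. hterm_eval G (f i) s)"
  unfolding fin_diff_def by (rule finite_subset[OF _ assms]) auto

lemma trace_closed_fin_diff: "is_trace a \<Longrightarrow> r \<in> a \<Longrightarrow> fin_diff r s \<Longrightarrow> s \<in> a"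
  unfolding is_trace_def by blast

lemma hterm_eval_hsubst:
  "hterm_eval G (hsubst g t) s = hterm_eval G t (\<lambda>i. hterm_eval G (g i) s)"
  by (induction t arbitrary: s) auto

lemma tsym_in_hterms: "w \<in> Inl ` tau \<union> Inr ` X \<Longrightarrow> tsym w \<in> hterms tau X"
  unfolding tsym_def by (intro hterms.app) (auto intro: hterms.proj)

lemma App_eq_tq_tsym:
  assumes "\<forall>i\<ge>n. f i = E i"
  shows "App w f = tq (tsym w) (map f [0..<n])"
  unfolding tq_def tsym_def using assms by auto

lemma clone_hom_eq_hterm_eval:
  assumes h: "clone_hom tau X a ops \<beta>" and t: "t \<in> hterms tau X" and s: "s \<in> a"
  shows "\<beta> t s = hterm_eval (\<lambda>w. \<beta> (tsym w)) t s"
  using t s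
proof (induction t arbitrary: s rule: hterms.induct)
  case (proj i)
  then show ?case using h by (simp add: clone_hom_def fproj_def)
next
  case (app w f)
  have proj: "\<beta> (E i) s = s i" for i
    using h \<open>s \<in> a\<close> by (simp add: clone_hom_def fproj_def)
  have "\<exists>n. \<forall>i\<ge>n. f i = E i"
    using app.hyps(3) by (simp add: MOST_nat_le[symmetric] MOST_iff_cofinite)
  then obtain n where n: "\<forall>i\<ge>n. f i = E i" ..
  let ?ts = "map f [0..<n]"
  have "set ?ts \<subseteq> hterms tau X" using app.hyps(2) by auto
  then have "\<beta> (App w f) = fq a (\<beta> (tsym w)) (map \<beta> ?ts)"
    using h tsym_in_hterms[OF app.hyps(1)] App_eq_tq_tsym[OF n]
    unfolding clone_hom_def by metis
  moreover have "thread_upd s (map (\<lambda>\<psi>. \<psi> s) (map \<beta> ?ts)) = (\<lambda>i. \<beta> (f i) s)"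
    using n proj by (auto simp: thread_upd_def not_less)
  ultimately show ?case using app.IH \<open>s \<in> a\<close> by (simp add: fq_def)
qed

lemma hterm_eval_cong_fin_diff:
  assumes tr: "is_trace a" and t: "t \<in> hterms tau X"
    and agree: "\<And>w r. w \<in> Inl ` tau \<union> Inr ` X \<Longrightarrow> r \<in> a \<Longrightarrow> fin_diff s\<^sub>0 r \<Longrightarrow> G w r = G' w r"
    and "s \<in> a" and "fin_diff s\<^sub>0 s"
  shows "hterm_eval G t s = hterm_eval G' t s"
  using t \<open>s \<in> a\<close> \<open>fin_diff s\<^sub>0 s\<close>
proof (induction t arbitrary: s rule: hterms.induct)
  case (proj i)
  then show ?case by simp
next
  case (app w f)
  let ?r = "\<lambda>i. hterm_eval G' (f i) s"
  have "fin_diff s ?r" by (rule fin_diff_hterm_eval_args[OF app.hyps(3)])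
  then have "?r \<in> a" "fin_diff s\<^sub>0 ?r"
    using trace_closed_fin_diff[OF tr] fin_diff_trans app.prems by blast+
  then show ?case using app agree by simp
qed

definition frozen_interp :: "('s \<Rightarrow> (nat \<Rightarrow> 'a) \<Rightarrow> 'a) \<Rightarrow> ('x \<Rightarrow> 'a) \<Rightarrow> 's + 'x \<Rightarrow> (nat \<Rightarrow> 'a) \<Rightarrow> 'a" where
  "frozen_interp ops c = case_sum ops (\<lambda>x _. c x)"

lemma weak_hom_frozen_interp:
  assumes tr: "is_trace a"
  shows "weak_hom tau X a ops (\<lambda>t. restrict (hterm_eval (frozen_interp ops c) t) a)"
    (is "weak_hom tau X a ops ?\<alpha>")
proof -
  let ?G = "frozen_interp ops c"
  have "?\<alpha> (tq t ts) s = fq a (?\<alpha> t) (map ?\<alpha> ts) s" for t ts s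
  proof (cases "s \<in> a")
    case True
    have "(\<lambda>i. hterm_eval ?G (if i < length ts then ts ! i else E i) s)
          = thread_upd s (map (\<lambda>\<psi>. \<psi> s) (map ?\<alpha> ts))"
      using True by (auto simp: thread_upd_def)
    moreover have "thread_upd s (map (\<lambda>\<psi>. \<psi> s) (map ?\<alpha> ts)) \<in> a"
      using trace_closed_fin_diff[OF tr True fin_diff_thread_upd] .
    ultimately show ?thesis using True by (simp add: tq_def fq_def hterm_eval_hsubst)
  qed (simp add: fq_def)
  then have "?\<alpha> (tq t ts) = fq a (?\<alpha> t) (map ?\<alpha> ts)" for t ts
    by blast
  moreover have "constant_on a (?\<alpha> (tsym (Inr x)))" for x
    unfolding constant_on_def by (auto simp: tsym_def frozen_interp_def)
  ultimately show ?thesis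
    unfolding weak_hom_def clone_hom_def
    by (intro conjI ballI allI impI)
      (simp_all add: fproj_def tsym_def frozen_interp_def)
qed

lemma strong_hom_eq_frozen_at:
  assumes tr: "is_trace a" and sh: "strong_hom tau X a ops \<beta>"
    and t: "t \<in> hterms tau X" and s\<^sub>0: "s\<^sub>0 \<in> a"
  shows "\<beta> t s\<^sub>0 = hterm_eval (frozen_interp ops (\<lambda>x. \<beta> (tsym (Inr x)) s\<^sub>0)) t s\<^sub>0"
proof -
  have h: "clone_hom tau X a ops \<beta>" using sh by (simp add: strong_hom_def)
  have "hterm_eval (frozen_interp ops (\<lambda>x. \<beta> (tsym (Inr x)) s\<^sub>0)) t s\<^sub>0
        = hterm_eval (\<lambda>w. \<beta> (tsym w)) t s\<^sub>0"
  proof (rule hterm_eval_cong_fin_diff[OF tr t _ s\<^sub>0 fin_diff_refl])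
    fix w r assume "w \<in> Inl ` tau \<union> Inr ` X" and "r \<in> a" "fin_diff s\<^sub>0 r"
    then show "frozen_interp ops (\<lambda>x. \<beta> (tsym (Inr x)) s\<^sub>0) w r = \<beta> (tsym w) r"
      using h sh s\<^sub>0
      by (auto simp: frozen_interp_def clone_hom_def strong_hom_def semiconstant_def)
  qed
  then show ?thesis using clone_hom_eq_hterm_eval[OF h t s\<^sub>0] by simp
qed

lemma weak_hom_imp_strong_hom: "weak_hom tau X a ops \<alpha> \<Longrightarrow> strong_hom tau X a ops \<alpha>"
  unfolding weak_hom_def strong_hom_def constant_on_def semiconstant_def by metis

lemma clone_hom_extensional:
  "clone_hom tau X a ops \<beta> \<Longrightarrow> t \<in> hterms tau X \<Longrightarrow> s \<notin> a \<Longrightarrow> \<beta> t s = undefined"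
  unfolding clone_hom_def by (auto simp: PiE_def extensional_def)

lemma weak_identity_imp_strong_identity:
  assumes tr: "is_trace a" and u1: "u1 \<in> hterms tau X" and u2: "u2 \<in> hterms tau X"
    and weak: "\<forall>\<alpha>. weak_hom tau X a ops \<alpha> \<longrightarrow> \<alpha> u1 = \<alpha> u2"
    and sh: "strong_hom tau X a ops \<beta>"
  shows "\<beta> u1 = \<beta> u2"
proof
  fix s\<^sub>0
  show "\<beta> u1 s\<^sub>0 = \<beta> u2 s\<^sub>0"
  proof (cases "s\<^sub>0 \<in> a")
    case True
    let ?G = "frozen_interp ops (\<lambda>x. \<beta> (tsym (Inr x)) s\<^sub>0)"
    have "restrict (hterm_eval ?G u1) a = restrict (hterm_eval ?G u2) a"
      by (rule weak[rule_format, OF weak_hom_frozen_interp[OF tr]])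
    from fun_cong[OF this, of s\<^sub>0]
    have "hterm_eval ?G u1 s\<^sub>0 = hterm_eval ?G u2 s\<^sub>0"
      using True by simp
    then show ?thesis
      using strong_hom_eq_frozen_at[OF tr sh u1 True] strong_hom_eq_frozen_at[OF tr sh u2 True]
      by simp
  next
    case False
    have h: "clone_hom tau X a ops \<beta>" using sh by (simp add: strong_hom_def)
    show ?thesis
      using clone_hom_extensional[OF h u1 False] clone_hom_extensional[OF h u2 False] by simp
  qed
qed

theorem mainTheorem2:
  fixes tau :: "'s set" and X :: "'x set"
    and a :: "(nat \<Rightarrow> 'a) set" and ops :: "'s \<Rightarrow> (nat \<Rightarrow> 'a) \<Rightarrow> 'a"
    and u1 u2 :: "('s, 'x) hterm"
  assumes "is_trace a"
    and "u1 \<in> hterms tau X" and "u2 \<in> hterms tau X"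
  shows "(\<forall>\<alpha>. weak_hom tau X a ops \<alpha> \<longrightarrow> \<alpha> u1 = \<alpha> u2) \<longleftrightarrow>
         (\<forall>\<beta>. strong_hom tau X a ops \<beta> \<longrightarrow> \<beta> u1 = \<beta> u2)"
proof
  assume "\<forall>\<alpha>. weak_hom tau X a ops \<alpha> \<longrightarrow> \<alpha> u1 = \<alpha> u2"
  then show "\<forall>\<beta>. strong_hom tau X a ops \<beta> \<longrightarrow> \<beta> u1 = \<beta> u2"
    using weak_identity_imp_strong_identity[OF assms] by blast
next
  assume "\<forall>\<beta>. strong_hom tau X a ops \<beta> \<longrightarrow> \<beta> u1 = \<beta> u2"
  then show "\<forall>\<alpha>. weak_hom tau X a ops \<alpha> \<longrightarrow> \<alpha> u1 = \<alpha> u2"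
    using weak_hom_imp_strong_hom by blast
qed

end
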